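(* $\mathrm{H}^1(\mathcal{W},\mathcal{W}\wedge\mathcal{W})=0$, where $\mathcal{W}$ acts on $\mathcal{W}\wedge\mathcal{W}$ via the adjoint action. In particular, every Lie bialgebra structure on $\mathcal{W}$ is coboundary.
   Context: The Witt algebra $\mathcal{W}$ has basis $\{L_n\mid n\in\mathbb{Z}\}$ and bracket $[L_m,L_n]=(m-n)L_{m+n}$. For a Lie algebra $L$ and $L$-module $M$, $\mathrm{H}^1(L,M)$ is the quotient of 1-cocycles (linear $d$ with $d([x,y])=x\cdot d(y)-y\cdot d(x)$) by 1-coboundaries ($x\mapsto x\cdot v$). A Lie bialgebra $(L,\delta)$ is a Lie algebra with a cobracket $\delta:L\to L\wedge L$ satisfying the co-Jacobi identity and being a 1-cocycle with values in $L\wedge L$; it is coboundary if $\delta$ is a 1-coboundary. *)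

theory Defs
  imports Complex_Main
begin

text \<open>The Witt algebra over the complex numbers: an element sum_n c_n L_n is
  represented by its finitely supported coefficient function.\<close>

definition W :: "(int \<Rightarrow> complex) set" where
  "W = {f. finite {n. f n \<noteq> 0}}"

definition witt_L :: "int \<Rightarrow> (int \<Rightarrow> complex)" where
  "witt_L n = (\<lambda>k. if k = n then 1 else 0)"

text \<open>Bilinear extension of [L_m, L_n] = (m - n) L_(m+n).\<close>
definition witt_bracket :: "(int \<Rightarrow> complex) \<Rightarrow> (int \<Rightarrow> complex) \<Rightarrow> (int \<Rightarrow> complex)" where
  "witt_bracket f g = (\<lambda>k. \<Sum>m\<in>{m. f m \<noteq> 0}. of_int (2*m - k) * f m * g (k - m))"

text \<open>W tensor W: finitely supported T p q = coefficient of L_p (x) L_q.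
  W wedge W is realised as the antisymmetric tensors (L_m wedge L_n = L_m(x)L_n - L_n(x)L_m).\<close>
definition WW :: "(int \<Rightarrow> int \<Rightarrow> complex) set" where
  "WW = {T. finite {(p,q). T p q \<noteq> 0} \<and> (\<forall>p q. T q p = - T p q)}"

text \<open>Adjoint action x.(a(x)b) = [x,a](x)b + a(x)[x,b].\<close>
definition ad_act :: "(int \<Rightarrow> complex) \<Rightarrow> (int \<Rightarrow> int \<Rightarrow> complex) \<Rightarrow> (int \<Rightarrow> int \<Rightarrow> complex)" where
  "ad_act x T = (\<lambda>p q. \<Sum>a\<in>{a. x a \<noteq> 0}.
      x a * (of_int (2*a - p) * T (p - a) q + of_int (2*a - q) * T p (q - a)))"

definition W_linear_to_WW :: "((int \<Rightarrow> complex) \<Rightarrow> (int \<Rightarrow> int \<Rightarrow> complex)) \<Rightarrow> bool" where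
  "W_linear_to_WW d \<longleftrightarrow>
     (\<forall>f\<in>W. d f \<in> WW) \<and>
     (\<forall>f\<in>W. \<forall>g\<in>W. d (\<lambda>n. f n + g n) = (\<lambda>p q. d f p q + d g p q)) \<and>
     (\<forall>c. \<forall>f\<in>W. d (\<lambda>n. c * f n) = (\<lambda>p q. c * d f p q))"

definition cocycle :: "((int \<Rightarrow> complex) \<Rightarrow> (int \<Rightarrow> int \<Rightarrow> complex)) \<Rightarrow> bool" where
  "cocycle d \<longleftrightarrow> W_linear_to_WW d \<and>
     (\<forall>x\<in>W. \<forall>y\<in>W. d (witt_bracket x y) = (\<lambda>p q. ad_act x (d y) p q - ad_act y (d x) p q))"

definition coboundary :: "((int \<Rightarrow> complex) \<Rightarrow> (int \<Rightarrow> int \<Rightarrow> complex)) \<Rightarrow> bool" where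
  "coboundary d \<longleftrightarrow> W_linear_to_WW d \<and> (\<exists>v\<in>WW. \<forall>x\<in>W. d x = ad_act x v)"

definition delta_tensor_id ::
  "((int \<Rightarrow> complex) \<Rightarrow> (int \<Rightarrow> int \<Rightarrow> complex)) \<Rightarrow> (int \<Rightarrow> int \<Rightarrow> complex) \<Rightarrow> (int \<Rightarrow> int \<Rightarrow> int \<Rightarrow> complex)" where
  "delta_tensor_id \<delta> T = (\<lambda>p q r. \<Sum>m\<in>{m. \<exists>s. T m s \<noteq> 0}. \<delta> (witt_L m) p q * T m r)"

text \<open>co-Jacobi: (1 + xi + xi^2)(delta (x) 1) delta = 0, xi the cyclic permutation
  x1(x)x2(x)x3 -> x2(x)x3(x)x1.\<close>
definition co_jacobi :: "((int \<Rightarrow> complex) \<Rightarrow> (int \<Rightarrow> int \<Rightarrow> complex)) \<Rightarrow> bool" where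
  "co_jacobi \<delta> \<longleftrightarrow> (\<forall>x\<in>W. \<forall>p q r.
      delta_tensor_id \<delta> (\<delta> x) p q r + delta_tensor_id \<delta> (\<delta> x) r p q
      + delta_tensor_id \<delta> (\<delta> x) q r p = 0)"

definition witt_lie_bialgebra :: "((int \<Rightarrow> complex) \<Rightarrow> (int \<Rightarrow> int \<Rightarrow> complex)) \<Rightarrow> bool" where
  "witt_lie_bialgebra \<delta> \<longleftrightarrow> cocycle \<delta> \<and> co_jacobi \<delta>"

end

theory Submission
  imports Defs
begin

text \<open>Put \<open>A\<^sub>m = d(L\<^sub>m)\<close>, so that the cocycle condition reads
  \<open>(m - n) A\<^sub>m\<^sub>+\<^sub>n = L\<^sub>m\<cdot>A\<^sub>n - L\<^sub>n\<cdot>A\<^sub>m\<close>. Since \<open>L\<^sub>0\<close> acts on \<open>L\<^sub>p \<otimes> L\<^sub>q\<close>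
  by \<open>-(p + q)\<close>, subtracting the coboundary of \<open>v\<^sub>p\<^sub>q = -A\<^sub>0(p, q)/(p + q)\<close> removes \<open>A\<^sub>0\<close>
  away from the diagonal \<open>p + q = 0\<close>, and the diagonal of \<open>v\<close> can be chosen, by solving
  a first order recurrence, so that \<open>A\<^sub>1\<close> disappears as well. The remaining cocycle is
  homogeneous, and the cocycle identity turns the weight components of \<open>A\<^sub>-\<^sub>1\<close>, \<open>A\<^sub>2\<close>,
  \<open>A\<^sub>-\<^sub>2\<close> into solutions of first order recurrences with nonvanishing leading
  coefficients. Finite support forces them to vanish, and \<open>L\<^sub>\<plusminus>\<^sub>1\<close>, \<open>L\<^sub>\<plusminus>\<^sub>2\<close> generate
  the Witt algebra. Finite support of \<open>d\<close> also makes the diagonal of \<open>v\<close> vanish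
  eventually, so that \<open>v\<close> lies in \<open>W \<wedge> W\<close>.\<close>

definition ad_L :: "int \<Rightarrow> (int \<Rightarrow> int \<Rightarrow> complex) \<Rightarrow> int \<Rightarrow> int \<Rightarrow> complex" where
  "ad_L n T = (\<lambda>p q. of_int (2*n - p) * T (p - n) q + of_int (2*n - q) * T p (q - n))"

lemma ad_act_witt_L: "ad_act (witt_L n) T = ad_L n T"
proof -
  have "{a. witt_L n a \<noteq> 0} = {n}" by (auto simp: witt_L_def)
  then show ?thesis by (auto simp: ad_act_def ad_L_def witt_L_def)
qed

lemma witt_bracket_L: "witt_bracket (witt_L m) (witt_L n) = (\<lambda>k. of_int (m - n) * witt_L (m + n) k)"
proof -
  have "{a. witt_L m a \<noteq> 0} = {m}" by (auto simp: witt_L_def)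
  then show ?thesis by (auto simp: witt_bracket_def witt_L_def fun_eq_iff)
qed

lemma witt_L_in_W: "witt_L n \<in> W"
proof -
  have "{k. witt_L n k \<noteq> 0} = {n}" by (auto simp: witt_L_def)
  then show ?thesis by (simp add: W_def)
qed

lemma ad_L_commutator:
  "ad_L m (ad_L n T) p q - ad_L n (ad_L m T) p q = of_int (m - n) * ad_L (m + n) T p q"
proof -
  have "p - n - m = p - (m + n)" "p - m - n = p - (m + n)"
       "q - n - m = q - (m + n)" "q - m - n = q - (m + n)"
    by auto
  then show ?thesis unfolding ad_L_def by (simp only:) (simp add: algebra_simps)
qed

lemma ad_L_diff: "ad_L m (\<lambda>p q. X p q - Y p q) p q = ad_L m X p q - ad_L m Y p q"
  by (simp add: ad_L_def algebra_simps)

lemma ad_L_zero: "ad_L m (\<lambda>p q. 0) = (\<lambda>p q. 0)"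
  by (simp add: ad_L_def)

lemma ad_L_0: "ad_L 0 T p q = - of_int (p + q) * T p q"
  by (simp add: ad_L_def algebra_simps)

lemma ad_L_antisym:
  assumes "\<And>p q. v q p = - v p q"
  shows "ad_L m v q p = - ad_L m v p q"
  unfolding ad_L_def using assms[of p "q - m"] assms[of "p - m" q] by (simp add: algebra_simps)

definition row_bounded :: "(int \<Rightarrow> int \<Rightarrow> complex) \<Rightarrow> bool" where
  "row_bounded T \<longleftrightarrow> (\<exists>N. \<forall>p\<ge>N. \<forall>q. T p q = 0)"

lemma finite_support_row_bounded:
  assumes "finite {(p, q). T p q \<noteq> 0}"
  shows "row_bounded T"
proof -
  have "finite (fst ` {(p, q). T p q \<noteq> 0})" using assms by simp
  then obtain M where M: "\<And>p. p \<in> fst ` {(p, q). T p q \<noteq> 0} \<Longrightarrow> p \<le> M"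
    by (meson bdd_above.E bdd_above_finite)
  have "T p q = 0" if "p \<ge> M + 1" for p q
    using M[of p] that by force
  then show ?thesis unfolding row_bounded_def by blast
qed

lemma recurrence_zero_upward:
  fixes f :: "int \<Rightarrow> complex"
  assumes "f a = 0"
    and "\<And>p. p > a \<Longrightarrow> b p * f p + c p * f (p - 1) = 0"
    and "\<And>p. p > a \<Longrightarrow> b p \<noteq> 0"
    and "p \<ge> a"
  shows "f p = 0"
  using \<open>p \<ge> a\<close>
proof (induction p rule: int_ge_induct)
  case base
  show ?case by (rule assms(1))
next
  case (step i)
  then have "b (i + 1) * f (i + 1) = 0" using assms(2)[of "i + 1"] by simp
  then show ?case using assms(3)[of "i + 1"] step by simp
qed

lemma recurrence_zero_downward:
  fixes f :: "int \<Rightarrow> complex"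
  assumes "\<And>p. p \<ge> a \<Longrightarrow> b p * f p + c p * f (p + 1) = 0"
    and "\<And>p. p \<ge> a \<Longrightarrow> b p \<noteq> 0"
    and "\<And>p. p \<ge> M \<Longrightarrow> f p = 0"
    and "p \<ge> a"
  shows "f p = 0"
proof -
  have "p \<le> max M p" by simp
  then have "p \<ge> a \<longrightarrow> f p = 0"
  proof (induction p rule: int_le_induct)
    case base
    show ?case using assms(3) by (simp add: max_def)
  next
    case (step i)
    show ?case
    proof
      assume i: "i - 1 \<ge> a"
      then have "b (i - 1) * f (i - 1) = 0" using step assms(1)[of "i - 1"] by simp
      then show "f (i - 1) = 0" using assms(2) i by simp
    qed
  qed
  then show ?thesis using assms(4) by simp
qed

fun recurrence_solution :: "(int \<Rightarrow> complex) \<Rightarrow> nat \<Rightarrow> complex" where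
  "recurrence_solution \<alpha> 0 = 0"
| "recurrence_solution \<alpha> (Suc k) =
     (\<alpha> (int k + 1) + of_int (int k - 1) * recurrence_solution \<alpha> k) / of_nat (k + 2)"

lemma recurrence_solution_eq:
  assumes "p \<ge> 1"
  shows "of_int (2 - p) * recurrence_solution \<alpha> (nat (p - 1))
         + of_int (1 + p) * recurrence_solution \<alpha> (nat p) = \<alpha> p"
proof -
  obtain k where k: "p = int k + 1" using assms by (metis add.commute zle_iff_zadd)
  have "nat p = Suc k" "nat (p - 1) = k" "(of_int (1 + p) :: complex) = of_nat (k + 2)"
    using k by auto
  moreover have "(of_nat (k + 2) :: complex) \<noteq> 0" by (simp only: of_nat_eq_0_iff)
  ultimately show ?thesis using k by (simp add: field_simps)
qed

lemma odd_recurrence_solvable: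
  fixes \<alpha> :: "int \<Rightarrow> complex"
  assumes \<alpha>_odd: "\<And>p. \<alpha> (1 - p) = - \<alpha> p"
  obtains c where "\<And>p. c (- p) = - c p"
    and "\<And>p. of_int (2 - p) * c (p - 1) + of_int (1 + p) * c p = \<alpha> p"
proof
  define c where "c p = (if p \<ge> 0 then recurrence_solution \<alpha> (nat p)
                         else - recurrence_solution \<alpha> (nat (- p)))" for p
  show c_odd: "c (- p) = - c p" for p by (simp add: c_def)
  show "of_int (2 - p) * c (p - 1) + of_int (1 + p) * c p = \<alpha> p" for p
  proof (cases "p \<ge> 1")
    case True
    then show ?thesis using recurrence_solution_eq[OF True] by (simp add: c_def)
  next
    case False
    define p' where "p' = 1 - p"
    have "p' \<ge> 1" using False p'_def by simp
    then have "of_int (2 - p') * c (p' - 1) + of_int (1 + p') * c p' = \<alpha> p'"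
      using recurrence_solution_eq by (simp add: c_def)
    moreover have "c (p - 1) = - c p'" "c p = - c (p' - 1)" "\<alpha> p = - \<alpha> p'"
      "2 - p = 1 + p'" "1 + p = 2 - p'"
      using c_odd[of p'] c_odd[of "p' - 1"] \<alpha>_odd[of p] by (auto simp: p'_def)
    ultimately show ?thesis by (metis add.commute minus_add_distrib mult_minus_right)
  qed
qed

text \<open>The determinant of this linear system in \<open>X, Y, Z\<close> is the constant \<open>-12\<close>.\<close>
lemma three_term_elimination:
  fixes P X Y Z :: complex
  assumes "(1 - P) * X + (2 + P) * Y = 0" and "- P * Y + (3 + P) * Z = 0"
    and "(-4 - P) * Z + (P - 2) * X = 0"
  shows "X = 0"
proof -
  have "-12 * X = (2 + P) * (3 + P) * ((-4 - P) * Z + (P - 2) * X)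
      + (2 + P) * (4 + P) * (- P * Y + (3 + P) * Z) + P * (4 + P) * ((1 - P) * X + (2 + P) * Y)"
    by (simp add: algebra_simps)
  then show ?thesis using assms by simp
qed

lemma row_bounded_diff:
  assumes "row_bounded S" and "row_bounded T"
  shows "row_bounded (\<lambda>p q. S p q - T p q)"
proof -
  obtain M N where "\<forall>p\<ge>M. \<forall>q. S p q = 0" and "\<forall>p\<ge>N. \<forall>q. T p q = 0"
    using assms unfolding row_bounded_def by blast
  then have "\<forall>p\<ge>max M N. \<forall>q. S p q - T p q = 0" by simp
  then show ?thesis unfolding row_bounded_def by blast
qed

lemma row_bounded_ad_L:
  assumes "row_bounded T"
  shows "row_bounded (ad_L n T)"
proof -
  obtain N where N: "\<forall>p\<ge>N. \<forall>q. T p q = 0"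
    using assms unfolding row_bounded_def by blast
  then have "\<forall>p\<ge>N + \<bar>n\<bar>. \<forall>q. ad_L n T p q = 0" by (simp add: ad_L_def)
  then show ?thesis unfolding row_bounded_def by blast
qed

lemma finite_support_antisym:
  fixes v :: "int \<Rightarrow> int \<Rightarrow> complex"
  assumes antisym: "\<And>p q. v q p = - v p q"
    and off_diagonal: "finite {(p, q). p + q \<noteq> 0 \<and> v p q \<noteq> 0}"
    and diagonal: "\<And>p. p \<ge> N \<Longrightarrow> v p (- p) = 0"
  shows "finite {(p, q). v p q \<noteq> 0}"
proof (rule finite_subset)
  show "{(p, q). v p q \<noteq> 0} \<subseteq> {(p, q). p + q \<noteq> 0 \<and> v p q \<noteq> 0} \<union> (\<lambda>p. (p, - p)) ` {- N..N}"
  proof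
    fix x
    assume "x \<in> {(p, q). v p q \<noteq> 0}"
    then obtain p q where x: "x = (p, q)" and nz: "v p q \<noteq> 0" by blast
    show "x \<in> {(p, q). p + q \<noteq> 0 \<and> v p q \<noteq> 0} \<union> (\<lambda>p. (p, - p)) ` {- N..N}"
    proof (cases "p + q = 0")
      case True
      then have q: "q = - p" by simp
      then have "p < N" "- p < N"
        using nz diagonal[of p] diagonal[of "- p"] antisym[of p "- p"] by force+
      then show ?thesis using x q by auto
    qed (use x nz in simp)
  qed
qed (use off_diagonal in simp)

text \<open>\<open>A m p q\<close> stands for the coefficient of \<open>L\<^sub>p \<otimes> L\<^sub>q\<close> in \<open>d(L\<^sub>m)\<close>.\<close>
locale basis_cocycle =
  fixes A :: "int \<Rightarrow> int \<Rightarrow> int \<Rightarrow> complex"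
  assumes antisym: "A m q p = - A m p q"
    and bracket_rule: "of_int (m - n) * A (m + n) p q = ad_L m (A n) p q - ad_L n (A m) p q"
begin

lemma diff_coboundary:
  assumes "\<And>p q. v q p = - v p q"
  shows "basis_cocycle (\<lambda>m p q. A m p q - ad_L m v p q)"
proof
  fix m p q
  show "A m q p - ad_L m v q p = - (A m p q - ad_L m v p q)"
    using antisym[of m p q] ad_L_antisym[of v m p q, OF assms] by simp
next
  fix m n p q
  have "ad_L m (\<lambda>p q. A n p q - ad_L n v p q) p q - ad_L n (\<lambda>p q. A m p q - ad_L m v p q) p q
      = (ad_L m (A n) p q - ad_L n (A m) p q) - (ad_L m (ad_L n v) p q - ad_L n (ad_L m v) p q)"
    by (simp add: ad_L_diff)
  also have "\<dots> = of_int (m - n) * (A (m + n) p q - ad_L (m + n) v p q)"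
    using bracket_rule[of m n p q] ad_L_commutator[of m n v p q] by (simp add: algebra_simps)
  finally show "of_int (m - n) * (A (m + n) p q - ad_L (m + n) v p q)
      = ad_L m (\<lambda>p q. A n p q - ad_L n v p q) p q - ad_L n (\<lambda>p q. A m p q - ad_L m v p q) p q"
    by simp
qed

lemma vanishes_add:
  assumes "A a = (\<lambda>p q. 0)" "A b = (\<lambda>p q. 0)" "a \<noteq> b"
  shows "A (a + b) = (\<lambda>p q. 0)"
proof (intro ext)
  fix p q
  have "of_int (a - b) * A (a + b) p q = 0"
    using bracket_rule[of a b p q] assms(1,2) by (simp add: ad_L_zero)
  then show "A (a + b) p q = 0" using assms(3) by simp
qed

lemma weight_zero_vanishes:
  assumes off_diagonal: "\<And>p q. p + q \<noteq> 0 \<Longrightarrow> A 0 p q = 0"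
  shows "A 0 = (\<lambda>p q. 0)"
proof -
  define u where "u p = A 0 p (- p)" for p
  have rec: "of_int (1 + p) * u p + of_int (2 - p) * u (p - 1) = 0" for p
  proof -
    have "of_int (0 - 1) * A (0 + 1) p (1 - p) = ad_L 0 (A 1) p (1 - p) - ad_L 1 (A 0) p (1 - p)"
      by (rule bracket_rule)
    then have "ad_L 1 (A 0) p (1 - p) = 0" by (simp add: ad_L_0)
    then show ?thesis by (simp add: ad_L_def u_def algebra_simps)
  qed
  have u_nonneg: "u p = 0" if "p \<ge> 0" for p
  proof (rule recurrence_zero_upward[of u 0 "\<lambda>p. of_int (1 + p)" "\<lambda>p. of_int (2 - p)"])
    show "u 0 = 0" using antisym[of 0 0 0] by (simp add: u_def)
    fix p :: int
    assume "p > 0"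
    then show "(of_int (1 + p) :: complex) \<noteq> 0" by (simp only: of_int_eq_0_iff)
  qed (use rec that in auto)
  have u_zero: "u p = 0" for p
    using u_nonneg[of p] u_nonneg[of "- p"] antisym[of 0 p "- p"] by (cases "p \<ge> 0") (auto simp: u_def)
  show ?thesis
  proof (intro ext)
    fix p q
    show "A 0 p q = 0"
    proof (cases "p + q = 0")
      case True
      then have "q = - p" by simp
      then show ?thesis using u_zero[of p] by (simp add: u_def)
    qed (rule off_diagonal)
  qed
qed

lemma homogeneous:
  assumes "A 0 = (\<lambda>p q. 0)" and "p + q \<noteq> m"
  shows "A m p q = 0"
proof -
  have "of_int (0 - m) * A (0 + m) p q = ad_L 0 (A m) p q - ad_L m (A 0) p q"
    by (rule bracket_rule)
  then have "of_int (p + q - m) * A m p q = 0"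
    using assms(1) by (simp add: ad_L_0 ad_L_zero algebra_simps)
  moreover have "(of_int (p + q - m) :: complex) \<noteq> 0"
    using assms(2) by (simp only: of_int_eq_0_iff)
  ultimately show ?thesis by simp
qed

text \<open>The bound on \<open>k\<close> makes the reflection \<open>p \<mapsto> m - p\<close>, under which \<open>A\<^sub>m\<close> is
  antisymmetric, map \<open>p < k\<close> into \<open>p \<ge> k\<close>.\<close>
lemma vanishes_from_half_diagonal:
  assumes "A 0 = (\<lambda>p q. 0)" and "2 * k \<le> m + 1"
    and half: "\<And>p. p \<ge> k \<Longrightarrow> A m p (m - p) = 0"
  shows "A m = (\<lambda>p q. 0)"
proof (intro ext)
  fix p q
  show "A m p q = 0"
  proof (cases "p + q = m")
    case True
    then have q: "q = m - p" by simp
    show ?thesis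
    proof (cases "p \<ge> k")
      case True
      then show ?thesis using half q by simp
    next
      case False
      then have "A m q (m - q) = 0" using half[of q] q assms(2) by simp
      then show ?thesis using antisym[of m p q] q by simp
    qed
  qed (rule homogeneous[OF assms(1)])
qed

context
  assumes A0: "A 0 = (\<lambda>p q. 0)" and A1: "A 1 = (\<lambda>p q. 0)"
begin

lemma minus_one_recurrence:
  "of_int (2 + p) * A (-1) p (-1 - p) + of_int (2 - p) * A (-1) (p - 1) (- p) = 0"
proof -
  have "of_int (1 - -1) * A (1 + -1) p (- p) = ad_L 1 (A (-1)) p (- p) - ad_L (-1) (A 1) p (- p)"
    by (rule bracket_rule)
  then have "ad_L 1 (A (-1)) p (- p) = 0" using A0 A1 by (simp add: ad_L_zero)
  moreover have "- p - 1 = -1 - p" "2 * 1 - - p = 2 + p" by simp_all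
  ultimately show ?thesis unfolding ad_L_def by (simp add: add.commute)
qed

lemma minus_one_tail:
  assumes "p \<ge> 2"
  shows "A (-1) p (-1 - p) = 0"
proof (rule recurrence_zero_upward[of "\<lambda>p. A (-1) p (-1 - p)" 2 "\<lambda>p. of_int (2 + p)" "\<lambda>p. of_int (2 - p)"])
  show "A (-1) 2 (-1 - 2) = 0" using minus_one_recurrence[of 2] by simp
  fix p :: int
  assume "p > 2"
  then show "(of_int (2 + p) :: complex) \<noteq> 0" by (simp only: of_int_eq_0_iff)
  have "-1 - (p - 1) = - p" by simp
  then show "of_int (2 + p) * A (-1) p (-1 - p) + of_int (2 - p) * A (-1) (p - 1) (-1 - (p - 1)) = 0"
    using minus_one_recurrence[of p] by simp
qed (rule assms)

lemma minus_two_recurrence: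
  "of_int (3 + p) * A (-2) p (-2 - p) + of_int (2 - p) * A (-2) (p - 1) (-1 - p)
     = 3 * A (-1) p (-1 - p)"
proof -
  have "of_int (1 - -2) * A (1 + -2) p (-1 - p)
      = ad_L 1 (A (-2)) p (-1 - p) - ad_L (-2) (A 1) p (-1 - p)"
    by (rule bracket_rule)
  then have "3 * A (-1) p (-1 - p) = ad_L 1 (A (-2)) p (-1 - p)" using A1 by (simp add: ad_L_zero)
  moreover have "-1 - p - 1 = -2 - p" "2 * 1 - (-1 - p) = 3 + p" by simp_all
  ultimately show ?thesis unfolding ad_L_def by (simp add: add.commute)
qed

lemma minus_two_tail:
  assumes "p \<ge> 2"
  shows "A (-2) p (-2 - p) = 0"
proof (rule recurrence_zero_upward[of "\<lambda>p. A (-2) p (-2 - p)" 2 "\<lambda>p. of_int (3 + p)" "\<lambda>p. of_int (2 - p)"])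
  show "A (-2) 2 (-2 - 2) = 0" using minus_two_recurrence[of 2] minus_one_tail[of 2] by simp
  fix p :: int
  assume "p > 2"
  then show "(of_int (3 + p) :: complex) \<noteq> 0" by (simp only: of_int_eq_0_iff)
  have "-2 - (p - 1) = -1 - p" by simp
  then show "of_int (3 + p) * A (-2) p (-2 - p) + of_int (2 - p) * A (-2) (p - 1) (-2 - (p - 1)) = 0"
    using minus_two_recurrence[of p] minus_one_tail[of p] \<open>p > 2\<close> by simp
qed (rule assms)

lemma two_minus_one_relation:
  "of_int (p - 3) * A 2 p (2 - p) + of_int (-2 - p) * A 2 (p + 1) (1 - p)
     = of_int (4 - p) * A (-1) (p - 2) (1 - p) + of_int (3 + p) * A (-1) p (-1 - p)"
proof -
  have "of_int (2 - -1) * A (2 + -1) p (1 - p)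
      = ad_L 2 (A (-1)) p (1 - p) - ad_L (-1) (A 2) p (1 - p)"
    by (rule bracket_rule)
  then have "ad_L (-1) (A 2) p (1 - p) = ad_L 2 (A (-1)) p (1 - p)" using A1 by simp
  moreover have "p - -1 = p + 1" "1 - p - -1 = 2 - p" "2 * -1 - p = -2 - p"
    "2 * -1 - (1 - p) = p - 3" "2 * 2 - p = 4 - p" "2 * 2 - (1 - p) = 3 + p" "1 - p - 2 = -1 - p"
    by simp_all
  ultimately show ?thesis unfolding ad_L_def by (simp add: add.commute)
qed

lemma minus_one_vanishes:
  assumes "row_bounded (A 2)"
  shows "A (-1) = (\<lambda>p q. 0)"
proof (rule vanishes_from_half_diagonal[OF A0, of 0])
  obtain N where N: "\<And>p q. p \<ge> N \<Longrightarrow> A 2 p q = 0"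
    using assms unfolding row_bounded_def by blast
  txt \<open>Row-boundedness starts a downward recurrence for the weight-\<open>2\<close> diagonal, which
    then pins down the two entries of \<open>A\<^sub>-\<^sub>1\<close> left open by \<open>minus_one_tail\<close>.\<close>
  have diagonal_tail: "A 2 p (2 - p) = 0" if "p \<ge> 4" for p
  proof (rule recurrence_zero_downward[of 4 "\<lambda>p. of_int (p - 3)" "\<lambda>p. A 2 p (2 - p)" "\<lambda>p. of_int (-2 - p)" N])
    fix p :: int
    assume p: "p \<ge> 4"
    then show "(of_int (p - 3) :: complex) \<noteq> 0" by (simp only: of_int_eq_0_iff)
    have "2 - (p + 1) = 1 - p" by simp
    then show "of_int (p - 3) * A 2 p (2 - p) + of_int (-2 - p) * A 2 (p + 1) (2 - (p + 1)) = 0"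
      using two_minus_one_relation[of p] minus_one_tail[of p] minus_one_tail[of "p - 2"] p by simp
  qed (use N that in auto)
  have "A (-1) 1 (-2) = 0"
    using two_minus_one_relation[of 3] minus_one_tail[of 3] diagonal_tail[of 4] by simp
  moreover have "A (-1) 0 (-1) = 0"
    using minus_one_recurrence[of 1] calculation by simp
  ultimately show "A (-1) p (-1 - p) = 0" if "p \<ge> 0" for p
    using minus_one_tail[of p] that by (cases "p = 0 \<or> p = 1") auto
qed simp

context
  assumes Am1: "A (-1) = (\<lambda>p q. 0)"
begin

lemma two_vanishes: "A 2 = (\<lambda>p q. 0)"
proof (rule vanishes_from_half_diagonal[OF A0, of 1])
  show "A 2 p (2 - p) = 0" if "p \<ge> 1" for p
  proof (rule recurrence_zero_upward[of "\<lambda>p. A 2 p (2 - p)" 1 "\<lambda>p. of_int (-1 - p)" "\<lambda>p. of_int (p - 4)"])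
    show "A 2 1 (2 - 1) = 0" using antisym[of 2 1 1] by simp
    fix p :: int
    assume "p > 1"
    then show "(of_int (-1 - p) :: complex) \<noteq> 0" by (simp only: of_int_eq_0_iff)
    have "p - 1 + 1 = p" "1 - (p - 1) = 2 - p" "2 - (p - 1) = 3 - p" by simp_all
    then show "of_int (-1 - p) * A 2 p (2 - p) + of_int (p - 4) * A 2 (p - 1) (2 - (p - 1)) = 0"
      using two_minus_one_relation[of "p - 1"] Am1 by (simp add: add.commute)
  qed (rule that)
qed simp

lemma minus_two_vanishes: "A (-2) = (\<lambda>p q. 0)"
proof (rule vanishes_from_half_diagonal[OF A0, of "-1"])
  show "A (-2) p (-2 - p) = 0" if "p \<ge> -1" for p
  proof (rule recurrence_zero_upward[of "\<lambda>p. A (-2) p (-2 - p)" "-1" "\<lambda>p. of_int (3 + p)" "\<lambda>p. of_int (2 - p)"])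
    show "A (-2) (-1) (-2 - -1) = 0" using antisym[of "-2" "-1" "-1"] by simp
    fix p :: int
    assume "p > -1"
    then show "(of_int (3 + p) :: complex) \<noteq> 0" by (simp only: of_int_eq_0_iff)
    have "-2 - (p - 1) = -1 - p" by simp
    then show "of_int (3 + p) * A (-2) p (-2 - p) + of_int (2 - p) * A (-2) (p - 1) (-2 - (p - 1)) = 0"
      using minus_two_recurrence[of p] Am1 by simp
  qed (rule that)
qed simp

end

lemma vanishes:
  assumes "row_bounded (A 2)"
  shows "A m = (\<lambda>p q. 0)"
proof -
  note Am1 = minus_one_vanishes[OF assms]
  have up: "A m = (\<lambda>p q. 0)" if "m \<ge> 2" for m
    using that
  proof (induction m rule: int_ge_induct)
    case base
    show ?case using two_vanishes[OF Am1] .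
  next
    case (step i)
    then show ?case using vanishes_add[OF A1, of i] by (simp add: add.commute)
  qed
  have down: "A (- m) = (\<lambda>p q. 0)" if "m \<ge> 2" for m
    using that
  proof (induction m rule: int_ge_induct)
    case base
    show ?case using minus_two_vanishes[OF Am1] by simp
  next
    case (step i)
    then show ?case using vanishes_add[OF Am1, of "- i"] by (simp add: add.commute)
  qed
  consider "m \<ge> 2" | "m = 1" | "m = 0" | "m = -1" | "m \<le> -2" by linarith
  then show ?thesis
    by cases (use up down[of "- m"] A0 A1 Am1 in auto)
qed

end

lemma normalizing_coboundary:
  obtains v where "\<And>p q. v q p = - v p q"
    and "\<And>p q. p + q \<noteq> 0 \<Longrightarrow> v p q = - A 0 p q / of_int (p + q)"
    and "A 0 = ad_L 0 v" and "A 1 = ad_L 1 v"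
proof -
  define \<alpha> where "\<alpha> p = A 1 p (1 - p)" for p
  have \<alpha>_odd: "\<alpha> (1 - p) = - \<alpha> p" for p using antisym[of 1 "1 - p" p] by (simp add: \<alpha>_def)
  obtain c where c_odd: "\<And>p. c (- p) = - c p"
    and c_rec: "\<And>p. of_int (2 - p) * c (p - 1) + of_int (1 + p) * c p = \<alpha> p"
    using odd_recurrence_solvable[of \<alpha>, OF \<alpha>_odd] by blast
  define v where "v p q = (if p + q \<noteq> 0 then - A 0 p q / of_int (p + q) else c p)" for p q
  have v_anti: "v q p = - v p q" for p q
  proof (cases "p + q = 0")
    case True
    then have "q = - p" by simp
    then show ?thesis using c_odd[of p] by (simp add: v_def)
  next
    case False
    then show ?thesis using antisym[of 0 p q] by (simp add: v_def add.commute)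
  qed
  define E where "E m p q = A m p q - ad_L m v p q" for m p q
  interpret E: basis_cocycle E
    unfolding E_def[abs_def] using v_anti by (rule diff_coboundary)
  have E0: "E 0 = (\<lambda>p q. 0)"
  proof (rule E.weight_zero_vanishes)
    fix p q :: int
    assume "p + q \<noteq> 0"
    moreover have "(of_int (p + q) :: complex) \<noteq> 0" using calculation by (simp only: of_int_eq_0_iff not_False_eq_True)
    ultimately show "E 0 p q = 0" by (simp add: E_def ad_L_0 v_def del: of_int_add)
  qed
  have "E 1 p q = 0" for p q
  proof (cases "p + q = 1")
    case True
    have "ad_L 1 v p (1 - p) = of_int (2 - p) * v (p - 1) (1 - p) + of_int (1 + p) * v p (- p)"
      by (simp add: ad_L_def)
    also have "\<dots> = \<alpha> p" using c_rec[of p] by (simp add: v_def)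
    finally have "E 1 p (1 - p) = 0" by (simp add: E_def \<alpha>_def)
    moreover have "q = 1 - p" using True by simp
    ultimately show ?thesis by simp
  qed (rule E.homogeneous[OF E0])
  then have "A 0 = ad_L 0 v" and "A 1 = ad_L 1 v"
    using E0 by (simp_all add: E_def fun_eq_iff)
  moreover have "v p q = - A 0 p q / of_int (p + q)" if "p + q \<noteq> 0" for p q
    using that by (simp add: v_def)
  ultimately show thesis using that v_anti by blast
qed

lemma diagonal_eventually_zero:
  assumes v_anti: "\<And>p q. v q p = - v p q"
    and A0v: "A 0 = ad_L 0 v" and A1v: "A 1 = ad_L 1 v"
    and "row_bounded (A 1)" and "row_bounded (A (-2))"
  shows "\<exists>N. \<forall>p\<ge>N. v p (- p) = 0"
proof -
  define E where "E m p q = A m p q - ad_L m v p q" for m p q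
  interpret E: basis_cocycle E
    unfolding E_def[abs_def] using v_anti by (rule diff_coboundary)
  have E0: "E 0 = (\<lambda>p q. 0)" and E1: "E 1 = (\<lambda>p q. 0)"
    by (simp_all add: E_def A0v A1v fun_eq_iff)
  obtain N1 N2 where N1: "\<And>p q. p \<ge> N1 \<Longrightarrow> A 1 p q = 0" and N2: "\<And>p q. p \<ge> N2 \<Longrightarrow> A (-2) p q = 0"
    using assms(4,5) unfolding row_bounded_def by metis
  define d where "d p = v p (- p)" for p
  txt \<open>Far out, \<open>A\<^sub>1 = L\<^sub>1\<cdot>v\<close> and the vanishing tail of \<open>A\<^sub>-\<^sub>2 - L\<^sub>-\<^sub>2\<cdot>v\<close> give
    three independent linear relations between \<open>d p\<close>, \<open>d (p + 1)\<close>, \<open>d (p + 2)\<close>.\<close>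
  have rec1: "of_int (1 - p) * d p + of_int (2 + p) * d (p + 1) = 0" if "p + 1 \<ge> N1" for p
  proof -
    have "p + 1 - 1 = p" "1 - (p + 1) = - p" "- p - 1 = - (p + 1)" "2 * 1 - (p + 1) = 1 - p"
      "2 * 1 - - p = 2 + p" by simp_all
    then show ?thesis using fun_cong[OF fun_cong[OF A1v, of "p + 1"], of "- p"] N1[OF that]
      by (simp add: ad_L_def d_def)
  qed
  have rec2: "of_int (-4 - p) * d (p + 2) + of_int (p - 2) * d p = 0" if "p \<ge> 2" "p \<ge> N2" for p
  proof -
    have "p - -2 = p + 2" "-2 - p - -2 = - p" "2 * -2 - p = -4 - p" "2 * -2 - (-2 - p) = p - 2"
      by simp_all
    then have "ad_L (-2) v p (-2 - p) = of_int (-4 - p) * v (p + 2) (-2 - p) + of_int (p - 2) * v p (- p)"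
      unfolding ad_L_def by simp
    then have "of_int (-4 - p) * v (p + 2) (-2 - p) + of_int (p - 2) * v p (- p) = 0"
      using E.minus_two_tail[OF E0 E1 that(1)] N2[OF that(2)] by (simp add: E_def neg_eq_iff_add_eq_0)
    moreover have "v (p + 2) (-2 - p) = d (p + 2)" unfolding d_def by (rule arg_cong[of _ _ "v (p + 2)"]) simp
    moreover have "v p (- p) = d p" by (simp add: d_def)
    ultimately show ?thesis by (simp only:)
  qed
  have "d p = 0" if "p \<ge> max 2 (max N1 N2)" for p
  proof (rule three_term_elimination)
    show "(1 - of_int p) * d p + (2 + of_int p) * d (p + 1) = 0" using rec1[of p] that by simp
    have "of_int (1 - (p + 1)) * d (p + 1) + of_int (2 + (p + 1)) * d (p + 1 + 1) = 0"
      by (rule rec1) (use that in simp)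
    moreover have "(of_int (1 - (p + 1)) :: complex) = - of_int p"
      "(of_int (2 + (p + 1)) :: complex) = 3 + of_int p" "p + 1 + 1 = p + 2"
      by simp_all
    ultimately show "- of_int p * d (p + 1) + (3 + of_int p) * d (p + 2) = 0"
      by (simp only:)
    show "(-4 - of_int p) * d (p + 2) + (of_int p - 2) * d p = 0" using rec2[of p] that by simp
  qed
  then show ?thesis unfolding d_def by blast
qed

lemma is_coboundary:
  assumes fin: "\<And>m. finite {(p, q). A m p q \<noteq> 0}"
  obtains v where "finite {(p, q). v p q \<noteq> 0}" and "\<And>p q. v q p = - v p q"
    and "\<And>m. A m = ad_L m v"
proof -
  obtain v where v_anti: "\<And>p q. v q p = - v p q"
    and off_diagonal: "\<And>p q. p + q \<noteq> 0 \<Longrightarrow> v p q = - A 0 p q / of_int (p + q)"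
    and A0v: "A 0 = ad_L 0 v" and A1v: "A 1 = ad_L 1 v"
    using normalizing_coboundary by blast
  have row: "row_bounded (A m)" for m using fin by (rule finite_support_row_bounded)
  obtain N where N: "\<And>p. p \<ge> N \<Longrightarrow> v p (- p) = 0"
    using diagonal_eventually_zero[OF v_anti A0v A1v row row] by blast
  have "{(p, q). p + q \<noteq> 0 \<and> v p q \<noteq> 0} \<subseteq> {(p, q). A 0 p q \<noteq> 0}"
    using off_diagonal by auto
  then have "finite {(p, q). p + q \<noteq> 0 \<and> v p q \<noteq> 0}" using fin[of 0] finite_subset by blast
  then have v_fin: "finite {(p, q). v p q \<noteq> 0}"
    by (rule finite_support_antisym[of v, OF v_anti _ N])
  define E where "E m p q = A m p q - ad_L m v p q" for m p q
  interpret E: basis_cocycle E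
    unfolding E_def[abs_def] using v_anti by (rule diff_coboundary)
  have "row_bounded (E 2)"
    unfolding E_def
    by (intro row_bounded_diff row_bounded_ad_L row finite_support_row_bounded v_fin)
  then have "E m = (\<lambda>p q. 0)" for m
    by (rule E.vanishes[rotated 2]) (simp_all add: E_def A0v A1v fun_eq_iff)
  then have "A m = ad_L m v" for m by (simp add: E_def fun_eq_iff)
  with v_fin v_anti show thesis by (rule that)
qed

end

lemma basis_cocycle_of_cocycle:
  assumes "cocycle d"
  shows "basis_cocycle (\<lambda>m. d (witt_L m))"
proof
  have lin: "W_linear_to_WW d" using assms unfolding cocycle_def by blast
  fix m p q
  show "d (witt_L m) q p = - d (witt_L m) p q"
    using lin witt_L_in_W[of m] unfolding W_linear_to_WW_def WW_def by blast
  fix n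
  have "d (witt_bracket (witt_L m) (witt_L n))
      = (\<lambda>p q. ad_act (witt_L m) (d (witt_L n)) p q - ad_act (witt_L n) (d (witt_L m)) p q)"
    using assms witt_L_in_W unfolding cocycle_def by blast
  moreover have "d (witt_bracket (witt_L m) (witt_L n)) = (\<lambda>p q. of_int (m - n) * d (witt_L (m + n)) p q)"
    unfolding witt_bracket_L using lin witt_L_in_W[of "m + n"] unfolding W_linear_to_WW_def by blast
  ultimately show "of_int (m - n) * d (witt_L (m + n)) p q
      = ad_L m (d (witt_L n)) p q - ad_L n (d (witt_L m)) p q"
    by (simp add: ad_act_witt_L fun_eq_iff)
qed

lemma W_basis_expansion:
  assumes "x \<in> W"
  shows "x = (\<lambda>k. \<Sum>a\<in>{a. x a \<noteq> 0}. x a * witt_L a k)"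
proof
  fix k
  have "finite {a. x a \<noteq> 0}" using assms by (simp add: W_def)
  then have "(\<Sum>a\<in>{a. x a \<noteq> 0}. x a * witt_L a k) = (if x k \<noteq> 0 then x k else 0)"
    by (simp add: witt_L_def if_distrib cong: if_cong)
  then show "x k = (\<Sum>a\<in>{a. x a \<noteq> 0}. x a * witt_L a k)" by simp
qed

lemma W_linear_sum:
  assumes lin: "W_linear_to_WW d" and "finite S"
  shows "(\<lambda>k. \<Sum>a\<in>S. x a * witt_L a k) \<in> W
    \<and> d (\<lambda>k. \<Sum>a\<in>S. x a * witt_L a k) = (\<lambda>p q. \<Sum>a\<in>S. x a * d (witt_L a) p q)"
  using \<open>finite S\<close>
proof (induction S rule: finite_induct)
  case empty
  have zero: "(\<lambda>k::int. 0::complex) \<in> W" by (simp add: W_def)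
  have "\<forall>c. \<forall>f\<in>W. d (\<lambda>n. c * f n) = (\<lambda>p q. c * d f p q)"
    using lin unfolding W_linear_to_WW_def by blast
  from this[rule_format, where c = 0, OF zero] show ?case using zero by simp
next
  case (insert a S)
  define g where "g k = (\<Sum>a\<in>S. x a * witt_L a k)" for k
  define h where "h k = x a * witt_L a k" for k
  have g: "g \<in> W" "d g = (\<lambda>p q. \<Sum>a\<in>S. x a * d (witt_L a) p q)"
    using insert.IH by (simp_all add: g_def[abs_def])
  have "{k. h k \<noteq> 0} \<subseteq> {a}" by (auto simp: h_def witt_L_def)
  then have h: "h \<in> W" unfolding W_def using finite_subset by auto
  have "{k. h k + g k \<noteq> 0} \<subseteq> {k. h k \<noteq> 0} \<union> {k. g k \<noteq> 0}" by auto
  then have "(\<lambda>k. h k + g k) \<in> W" using h g unfolding W_def using finite_subset by auto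
  moreover have "d (\<lambda>k. h k + g k) = (\<lambda>p q. d h p q + d g p q)"
    using lin h g unfolding W_linear_to_WW_def by blast
  moreover have "d h = (\<lambda>p q. x a * d (witt_L a) p q)"
    using lin witt_L_in_W[of a] unfolding W_linear_to_WW_def h_def[abs_def] by blast
  moreover have "(\<lambda>k. \<Sum>a\<in>insert a S. x a * witt_L a k) = (\<lambda>k. h k + g k)"
    using insert by (simp add: h_def g_def)
  ultimately show ?case using insert g by simp
qed

lemma cocycle_imp_coboundary:
  assumes "cocycle d"
  shows "coboundary d"
proof -
  have lin: "W_linear_to_WW d" using assms unfolding cocycle_def by blast
  interpret basis_cocycle "\<lambda>m. d (witt_L m)"
    using assms by (rule basis_cocycle_of_cocycle)
  have fin: "finite {(p, q). d (witt_L m) p q \<noteq> 0}" for m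
    using lin witt_L_in_W unfolding W_linear_to_WW_def WW_def by blast
  obtain v where "finite {(p, q). v p q \<noteq> 0}" "\<And>p q. v q p = - v p q"
    and dL: "\<And>m. d (witt_L m) = ad_L m v"
    using is_coboundary[OF fin] by blast
  then have "v \<in> WW" unfolding WW_def by blast
  moreover have "d x = ad_act x v" if "x \<in> W" for x
  proof -
    have "finite {a. x a \<noteq> 0}" using that by (simp add: W_def)
    then have "d (\<lambda>k. \<Sum>a\<in>{a. x a \<noteq> 0}. x a * witt_L a k)
        = (\<lambda>p q. \<Sum>a\<in>{a. x a \<noteq> 0}. x a * d (witt_L a) p q)"
      using W_linear_sum[OF lin] by blast
    then have "d x = (\<lambda>p q. \<Sum>a\<in>{a. x a \<noteq> 0}. x a * d (witt_L a) p q)"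
      by (simp only: W_basis_expansion[OF that, symmetric])
    also have "\<dots> = ad_act x v" by (simp add: dL ad_act_def ad_L_def)
    finally show ?thesis .
  qed
  ultimately show ?thesis unfolding coboundary_def using lin by blast
qed

theorem theoremP0:
  shows "(\<forall>d. cocycle d \<longrightarrow> coboundary d) \<and>
         (\<forall>\<delta>. witt_lie_bialgebra \<delta> \<longrightarrow> coboundary \<delta>)"
  using cocycle_imp_coboundary unfolding witt_lie_bialgebra_def by blast

end
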